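(* Let $G$ be a connected weighted multigraph on the vertex set $V$, $|V|=n\ge2$, with positive edge weights, weighted adjacency matrix $A$, spectral radius $\rho$ and Perron vector $p=(p_1,\dots,p_n)^{\mathsf T}$, and let $\Lambda=\rho I-A$. For $j\in V$ let $\bar Y(j)$ be the $n\times n$ matrix obtained from $(\Lambda_{jj})^{-1}$ by inserting a zero row $j$ and a zero column $j$, and let $\bar Y(j)^i$ denote its column indexed by $i$. Then for all distinct $i,j\in V$, the vector $\bar Y(j)^i\,p_j+\bar Y(i)^j\,p_i$ is a positive multiple of $p$.
   Context: $A=(a_{ij})$ has $a_{ij}$ equal to the sum of weights of the edges joining $i$ and $j$ (loops, multiple edges allowed). The Perron vector $p$ is the positive eigenvector of $A$ for $\rho$ with entries summing to 1. $\Lambda_{jj}$ is $\Lambda$ with row and column $j$ deleted (rows and columns indexed by $V\setminus\{j\}$); it is invertible. *)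

theory Defs
  imports "HOL-Analysis.Analysis"
begin

text \<open>Vertex set V is a finite type 'n; a weighted multigraph is represented by its
weighted adjacency matrix A (a_ij = sum of weights of edges joining i and j).\<close>

definition weighted_multigraph_adj :: "real^'n^'n \<Rightarrow> bool" where
  "weighted_multigraph_adj A \<longleftrightarrow> (\<forall>i j. A$i$j = A$j$i) \<and> (\<forall>i j. 0 \<le> A$i$j)"

definition connected_adj :: "real^'n^'n \<Rightarrow> bool" where
  "connected_adj A \<longleftrightarrow> (\<forall>i j. (i, j) \<in> {(x, y). A$x$y > 0}\<^sup>*)"

definition complex_eigenvalue :: "real^'n^'n \<Rightarrow> complex \<Rightarrow> bool" where
  "complex_eigenvalue A z \<longleftrightarrow>
     (\<exists>v :: complex^'n. v \<noteq> 0 \<and> (\<chi> i j. complex_of_real (A$i$j)) *v v = z *s v)"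

definition spectral_radius :: "real^'n^'n \<Rightarrow> real" where
  "spectral_radius A = Max {cmod z | z. complex_eigenvalue A z}"

definition Ybar :: "real^'n^'n \<Rightarrow> 'n \<Rightarrow> real^'n^'n" where
  "Ybar M j = (THE Y. (\<forall>k l. (k = j \<or> l = j) \<longrightarrow> Y$k$l = 0) \<and>
      (\<forall>k l. k \<noteq> j \<longrightarrow> l \<noteq> j \<longrightarrow>
         (\<Sum>m\<in>UNIV - {j}. M$k$m * Y$m$l) = (if k = l then 1 else 0) \<and>
         (\<Sum>m\<in>UNIV - {j}. Y$k$m * M$m$l) = (if k = l then 1 else 0)))"

end

theory Submission
  imports Defs
begin

text \<open>The Perron vector \<open>p\<close> is a positive null vector of the symmetric matrix
\<open>\<Lambda> = \<rho>I - A\<close>, so the quadratic form of \<open>\<Lambda>\<close> equals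
\<open>1/2 \<Sum>\<^sub>k\<^sub>,\<^sub>l a\<^sub>k\<^sub>l p\<^sub>k p\<^sub>l (x\<^sub>k/p\<^sub>k - x\<^sub>l/p\<^sub>l)\<^sup>2\<close>: it is nonnegative and,
the graph being connected, vanishes only on multiples of \<open>p\<close>.
The column \<open>u\<close> of \<open>Y(j)\<close> indexed by \<open>i\<close> has \<open>u\<^sub>j = 0\<close> and \<open>(\<Lambda>u)\<^sub>k = \<delta>\<^sub>k\<^sub>i\<close>
for \<open>k \<noteq> j\<close>; as \<open>p\<^sup>T\<Lambda> = 0\<close>, the remaining entry is \<open>(\<Lambda>u)\<^sub>j = -p\<^sub>i/p\<^sub>j\<close>.
Hence \<open>w = p\<^sub>j Y(j)\<^sup>i + p\<^sub>i Y(i)\<^sup>j\<close> satisfies \<open>\<Lambda>w = 0\<close>, so \<open>w = c p\<close>, and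
\<open>c > 0\<close> because \<open>w\<^sub>j = p\<^sub>i Y(i)\<^sub>j\<^sub>j\<close> is positive.\<close>

definition principal_submatrix_nonsingular :: "real^'n^'n \<Rightarrow> 'n \<Rightarrow> bool" where
  "principal_submatrix_nonsingular M j \<longleftrightarrow>
     (\<forall>x. x$j = 0 \<longrightarrow> (\<forall>k. k \<noteq> j \<longrightarrow> (M *v x)$k = 0) \<longrightarrow> x = 0)"

definition padded_inverse :: "real^'n^'n \<Rightarrow> 'n \<Rightarrow> real^'n^'n \<Rightarrow> bool" where
  "padded_inverse M j Y \<longleftrightarrow> (\<forall>k l. (k = j \<or> l = j) \<longrightarrow> Y$k$l = 0) \<and>
      (\<forall>k l. k \<noteq> j \<longrightarrow> l \<noteq> j \<longrightarrow>
         (\<Sum>m\<in>UNIV - {j}. M$k$m * Y$m$l) = (if k = l then 1 else 0) \<and>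
         (\<Sum>m\<in>UNIV - {j}. Y$k$m * M$m$l) = (if k = l then 1 else 0))"

lemma Ybar_eq_The_padded_inverse: "Ybar M j = (THE Y. padded_inverse M j Y)"
  by (simp add: Ybar_def padded_inverse_def)

lemma matrix_vector_mult_component: "(M *v x)$k = (\<Sum>l\<in>UNIV. M$k$l * x$l)"
  by (simp add: matrix_vector_mult_def)

lemma matrix_vector_mult_component_off:
  fixes M :: "'a::comm_ring_1^'n^'m"
  assumes "x$j = 0"
  shows "(M *v x)$k = (\<Sum>m\<in>UNIV - {j}. M$k$m * x$m)"
  using assms by (simp add: matrix_vector_mult_component sum.remove[of UNIV j])

lemma padded_inverse_exists:
  fixes M :: "real^'n^'n"
  assumes "principal_submatrix_nonsingular M j"
  shows "\<exists>Y. padded_inverse M j Y"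
proof -
  \<comment> \<open>border \<open>M\<^sub>j\<^sub>j\<close> with the identity in row and column \<open>j\<close> and invert the whole matrix\<close>
  define B :: "real^'n^'n" where
    "B = (\<chi> k l. if k = j \<or> l = j then (if k = l then 1 else 0) else M$k$l)"
  have "B *v x = 0 \<Longrightarrow> x = 0" for x
  proof -
    assume Bx: "B *v x = 0"
    have "(B *v x)$j = x$j"
      unfolding matrix_vector_mult_component by (simp add: B_def of_bool_def[symmetric])
    then have xj: "x$j = 0" using Bx by simp
    have "(M *v x)$k = (B *v x)$k" if "k \<noteq> j" for k
      using xj that by (simp add: matrix_vector_mult_component_off B_def)
    then show "x = 0"
      using assms xj Bx unfolding principal_submatrix_nonsingular_def by simp
  qed
  then obtain N where left: "N ** B = mat 1"
    using matrix_left_invertible_ker by blast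
  then have right: "B ** N = mat 1"
    using matrix_left_right_inverse by blast
  have split: "(X ** Z)$k$l = X$k$j * Z$j$l + (\<Sum>m\<in>UNIV - {j}. X$k$m * Z$m$l)"
    for X Z :: "real^'n^'n" and k l
    unfolding matrix_matrix_mult_def by (simp add: sum.remove[of UNIV j])
  define Y :: "real^'n^'n" where "Y = (\<chi> k l. if k = j \<or> l = j then 0 else N$k$l)"
  have "padded_inverse M j Y"
    unfolding padded_inverse_def
  proof (intro conjI allI impI)
    fix k l
    show "k = j \<or> l = j \<Longrightarrow> Y$k$l = 0" by (auto simp: Y_def)
    assume "k \<noteq> j" "l \<noteq> j"
    then show "(\<Sum>m\<in>UNIV - {j}. M$k$m * Y$m$l) = (if k = l then 1 else 0)"
      and "(\<Sum>m\<in>UNIV - {j}. Y$k$m * M$m$l) = (if k = l then 1 else 0)"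
      using split[of B N k l] split[of N B k l] left right by (simp_all add: B_def Y_def mat_def)
  qed
  then show ?thesis ..
qed

lemma padded_inverse_unique:
  assumes "principal_submatrix_nonsingular M j"
    and "padded_inverse M j Y" and "padded_inverse M j Y'"
  shows "Y = Y'"
proof -
  have "column l Y = column l Y'" for l
  proof (cases "l = j")
    case True
    then show ?thesis using assms(2,3) by (simp add: padded_inverse_def column_def vec_eq_iff)
  next
    case False
    define x where "x = column l Y - column l Y'"
    have xj: "x$j = 0" using assms(2,3) by (simp add: padded_inverse_def x_def column_def)
    have "(M *v x)$k = 0" if "k \<noteq> j" for k
    proof -
      have "(M *v x)$k = (\<Sum>m\<in>UNIV - {j}. M$k$m * Y$m$l) - (\<Sum>m\<in>UNIV - {j}. M$k$m * Y'$m$l)"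
        using xj by (simp add: matrix_vector_mult_component_off x_def column_def
            right_diff_distrib sum_subtractf)
      then show ?thesis using assms(2,3) that False by (simp add: padded_inverse_def)
    qed
    then have "x = 0"
      using assms(1) xj unfolding principal_submatrix_nonsingular_def by blast
    then show ?thesis by (simp add: x_def)
  qed
  then show ?thesis by (simp add: vec_eq_iff column_def)
qed

lemma padded_inverse_Ybar:
  assumes "principal_submatrix_nonsingular M j"
  shows "padded_inverse M j (Ybar M j)"
proof -
  have "\<exists>!Y. padded_inverse M j Y"
    using padded_inverse_exists[OF assms] padded_inverse_unique[OF assms] by blast
  then show ?thesis unfolding Ybar_eq_The_padded_inverse by (rule theI')
qed

lemma Ybar_column:
  assumes "principal_submatrix_nonsingular M j" and "a \<noteq> j"
  shows "column a (Ybar M j) $ j = 0"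
    and "k \<noteq> j \<Longrightarrow> (M *v column a (Ybar M j))$k = (if k = a then 1 else 0)"
proof -
  note Y = padded_inverse_Ybar[OF assms(1), unfolded padded_inverse_def]
  show zero: "column a (Ybar M j) $ j = 0"
    using Y by (simp add: column_def)
  show "k \<noteq> j \<Longrightarrow> (M *v column a (Ybar M j))$k = (if k = a then 1 else 0)"
    using Y assms(2) unfolding matrix_vector_mult_component_off[OF zero] by (simp add: column_def)
qed

locale perron_graph =
  fixes A :: "real^'n^'n" and \<rho> :: real and p :: "real^'n"
  assumes symmetric: "\<And>k l. A$k$l = A$l$k"
    and nonneg: "\<And>k l. 0 \<le> A$k$l"
    and connected: "connected_adj A"
    and perron_pos: "\<And>k. 0 < p$k"
    and perron_eigen: "A *v p = \<rho> *\<^sub>R p"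
begin

abbreviation \<Lambda> :: "real^'n^'n" where "\<Lambda> \<equiv> \<rho> *\<^sub>R mat 1 - A"

lemma perron_nonzero: "p$k \<noteq> 0"
  using perron_pos[of k] by simp

lemma Lambda_mult: "\<Lambda> *v x = \<rho> *\<^sub>R x - A *v x"
  by (simp add: matrix_vector_mult_diff_rdistrib scaleR_matrix_vector_assoc[symmetric])

lemma Lambda_transpose: "transpose \<Lambda> = \<Lambda>"
proof -
  have "transpose A = A" by (simp add: transpose_def vec_eq_iff symmetric)
  then show ?thesis by (simp add: transpose_def vec_eq_iff mat_def)
qed

lemma perron_orthogonal_Lambda: "p \<bullet> (\<Lambda> *v x) = 0"
proof -
  have "p \<bullet> (\<Lambda> *v x) = (transpose \<Lambda> *v p) \<bullet> x"
    by (simp add: dot_lmul_matrix)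
  also have "\<dots> = 0"
    by (simp add: Lambda_transpose Lambda_mult perron_eigen)
  finally show ?thesis .
qed

lemma Lambda_form_eq_weighted_sum:
  "x \<bullet> (\<Lambda> *v x) = (\<Sum>k\<in>UNIV. \<Sum>l\<in>UNIV. A$k$l * p$k * p$l * (x$k/p$k - x$l/p$l)\<^sup>2) / 2"
proof -
  let ?r = "\<lambda>k. x$k / p$k"
  have row: "(\<Sum>l\<in>UNIV. A$k$l * p$l) = \<rho> * p$k" for k
    using arg_cong[OF perron_eigen, of "\<lambda>v. v$k"] by (simp add: matrix_vector_mult_component)
  have square: "(\<Sum>k\<in>UNIV. \<Sum>l\<in>UNIV. A$k$l * p$k * p$l * (?r k)\<^sup>2) = \<rho> * (\<Sum>k\<in>UNIV. (x$k)\<^sup>2)"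
  proof -
    have "(\<Sum>l\<in>UNIV. A$k$l * p$k * p$l * (?r k)\<^sup>2) = \<rho> * (x$k)\<^sup>2" for k
    proof -
      have "(\<Sum>l\<in>UNIV. A$k$l * p$k * p$l * (?r k)\<^sup>2) = (x$k)\<^sup>2 / p$k * (\<Sum>l\<in>UNIV. A$k$l * p$l)"
        unfolding sum_distrib_left
        by (intro sum.cong refl) (simp add: power2_eq_square field_simps perron_nonzero)
      also have "\<dots> = (x$k)\<^sup>2 / p$k * (\<rho> * p$k)"
        by (simp only: row)
      also have "\<dots> = \<rho> * (x$k)\<^sup>2"
        using perron_nonzero[of k] by simp
      finally show ?thesis .
    qed
    then show ?thesis
      by (simp add: sum_distrib_left)
  qed
  have square': "(\<Sum>k\<in>UNIV. \<Sum>l\<in>UNIV. A$k$l * p$k * p$l * (?r l)\<^sup>2) = \<rho> * (\<Sum>k\<in>UNIV. (x$k)\<^sup>2)"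
    using square by (subst sum.swap) (simp add: symmetric mult_ac)
  have cross: "(\<Sum>k\<in>UNIV. \<Sum>l\<in>UNIV. A$k$l * p$k * p$l * (?r k * ?r l))
      = (\<Sum>k\<in>UNIV. \<Sum>l\<in>UNIV. A$k$l * x$k * x$l)"
    by (intro sum.cong refl) (simp add: field_simps perron_nonzero)
  have form: "x \<bullet> (\<Lambda> *v x) = \<rho> * (\<Sum>k\<in>UNIV. (x$k)\<^sup>2) - (\<Sum>k\<in>UNIV. \<Sum>l\<in>UNIV. A$k$l * x$k * x$l)"
    unfolding Lambda_mult inner_diff_right inner_scaleR_right
    by (simp add: inner_vec_def matrix_vector_mult_component sum_distrib_left
        power2_eq_square mult_ac)
  have "(\<Sum>k\<in>UNIV. \<Sum>l\<in>UNIV. A$k$l * p$k * p$l * (?r k - ?r l)\<^sup>2)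
      = (\<Sum>k\<in>UNIV. \<Sum>l\<in>UNIV. A$k$l * p$k * p$l * (?r k)\<^sup>2
          - 2 * (A$k$l * p$k * p$l * (?r k * ?r l)) + A$k$l * p$k * p$l * (?r l)\<^sup>2)"
    by (intro sum.cong refl) (simp add: power2_diff algebra_simps)
  also have "\<dots> = (\<Sum>k\<in>UNIV. \<Sum>l\<in>UNIV. A$k$l * p$k * p$l * (?r k)\<^sup>2)
      - 2 * (\<Sum>k\<in>UNIV. \<Sum>l\<in>UNIV. A$k$l * p$k * p$l * (?r k * ?r l))
      + (\<Sum>k\<in>UNIV. \<Sum>l\<in>UNIV. A$k$l * p$k * p$l * (?r l)\<^sup>2)"
    by (simp add: sum.distrib sum_subtractf sum_distrib_left)
  finally show ?thesis
    unfolding form square square' cross by simp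
qed

lemma weighted_square_nonneg: "0 \<le> A$k$l * p$k * p$l * (x$k/p$k - x$l/p$l)\<^sup>2"
  using nonneg[of k l] perron_pos[of k] perron_pos[of l] by simp

lemma Lambda_form_nonneg: "0 \<le> x \<bullet> (\<Lambda> *v x)"
  unfolding Lambda_form_eq_weighted_sum
  by (intro divide_nonneg_pos sum_nonneg weighted_square_nonneg) auto

lemma Lambda_form_eq_0_imp_parallel:
  assumes "x \<bullet> (\<Lambda> *v x) = 0"
  shows "x = (x$j / p$j) *\<^sub>R p"
proof -
  have "\<forall>k\<in>UNIV. \<forall>l\<in>UNIV. A$k$l * p$k * p$l * (x$k/p$k - x$l/p$l)\<^sup>2 = 0"
    using assms unfolding Lambda_form_eq_weighted_sum
    by (simp add: sum_nonneg_eq_0_iff sum_nonneg weighted_square_nonneg)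
  then have "A$k$l * p$k * p$l * (x$k/p$k - x$l/p$l)\<^sup>2 = 0" for k l
    by blast
  then have edge: "x$k/p$k = x$l/p$l" if "0 < A$k$l" for k l
    using that perron_nonzero[of k] perron_nonzero[of l] by (smt (verit) mult_eq_0_iff power_eq_0_iff)
  have "x$k/p$k = x$l/p$l" if "(k, l) \<in> {(k, l). 0 < A$k$l}\<^sup>*" for k l
    using that by (induction rule: rtrancl_induct) (auto dest: edge)
  then have "x$k/p$k = x$j/p$j" for k
    using connected unfolding connected_adj_def by blast
  then show ?thesis
    by (simp add: vec_eq_iff field_simps perron_nonzero)
qed

lemma Lambda_form_eq_0_imp_zero:
  assumes "x \<bullet> (\<Lambda> *v x) = 0" and "x$j = 0"
  shows "x = 0"
  using Lambda_form_eq_0_imp_parallel[OF assms(1), of j] assms(2) by simp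

lemma Lambda_principal_submatrix_nonsingular: "principal_submatrix_nonsingular \<Lambda> j"
  unfolding principal_submatrix_nonsingular_def
proof (intro allI impI)
  fix x :: "real^'n"
  assume "x$j = 0" and "\<forall>k. k \<noteq> j \<longrightarrow> (\<Lambda> *v x)$k = 0"
  then have "x \<bullet> (\<Lambda> *v x) = 0"
    by (simp add: inner_vec_def) (metis (no_types, lifting) mult_zero_left mult_zero_right sum.neutral)
  then show "x = 0" using \<open>x$j = 0\<close> by (rule Lambda_form_eq_0_imp_zero)
qed

lemmas Ybar_Lambda_column = Ybar_column[OF Lambda_principal_submatrix_nonsingular]

lemma Ybar_Lambda_column_pivot:
  assumes "a \<noteq> b"
  shows "(\<Lambda> *v column a (Ybar \<Lambda> b))$b = - p$a / p$b"
proof -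
  let ?u = "column a (Ybar \<Lambda> b)"
  have "0 = p \<bullet> (\<Lambda> *v ?u)" by (simp add: perron_orthogonal_Lambda)
  also have "\<dots> = p$b * (\<Lambda> *v ?u)$b + (\<Sum>k\<in>UNIV - {b}. p$k * (\<Lambda> *v ?u)$k)"
    by (simp add: inner_vec_def sum.remove[of UNIV b])
  also have "(\<Sum>k\<in>UNIV - {b}. p$k * (\<Lambda> *v ?u)$k) = (\<Sum>k\<in>UNIV - {b}. if k = a then p$k else 0)"
    using Ybar_Lambda_column(2)[OF assms] by (intro sum.cong refl) auto
  also have "\<dots> = p$a" using assms by simp
  finally show ?thesis
    using perron_nonzero[of b] by (simp add: field_simps)
qed

text \<open>\<open>Y(a)\<^sub>b\<^sub>b\<close> is the value of the quadratic form at the column \<open>Y(a)\<^sup>b\<close>.\<close>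
lemma Ybar_Lambda_diagonal_pos:
  assumes "b \<noteq> a"
  shows "0 < Ybar \<Lambda> a $ b $ b"
proof -
  let ?v = "column b (Ybar \<Lambda> a)"
  have "?v \<bullet> (\<Lambda> *v ?v) = (\<Sum>k\<in>UNIV. if k = b then ?v$k else 0)"
    unfolding inner_vec_def
  proof (intro sum.cong refl)
    fix k
    show "?v$k \<bullet> (\<Lambda> *v ?v)$k = (if k = b then ?v$k else 0)"
      using Ybar_Lambda_column[OF assms] assms by (cases "k = a") auto
  qed
  then have form: "?v \<bullet> (\<Lambda> *v ?v) = Ybar \<Lambda> a $ b $ b"
    by (simp add: column_def)
  have "?v \<noteq> 0"
    using Ybar_Lambda_column(2)[OF assms, of b] assms by auto
  then have "?v \<bullet> (\<Lambda> *v ?v) \<noteq> 0"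
    using Lambda_form_eq_0_imp_zero Ybar_Lambda_column(1)[OF assms] by blast
  then show ?thesis
    using form Lambda_form_nonneg[of ?v] by simp
qed

lemma Ybar_Lambda_symmetrized_null:
  assumes "i \<noteq> j"
  shows "\<Lambda> *v (p$j *\<^sub>R column i (Ybar \<Lambda> j) + p$i *\<^sub>R column j (Ybar \<Lambda> i)) = 0"
proof -
  have "p$j * (\<Lambda> *v column i (Ybar \<Lambda> j))$k + p$i * (\<Lambda> *v column j (Ybar \<Lambda> i))$k = 0" for k
    using assms Ybar_Lambda_column(2)[of i j k] Ybar_Lambda_column(2)[of j i k]
      Ybar_Lambda_column_pivot[of i j] Ybar_Lambda_column_pivot[of j i]
      perron_nonzero[of i] perron_nonzero[of j]
    by (cases "k = i"; cases "k = j") auto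
  then show ?thesis
    by (simp add: vec_eq_iff matrix_vector_right_distrib matrix_vector_mult_scaleR)
qed

end

text \<open>The value of \<open>spectral_radius\<close>, the normalisation of \<open>p\<close> and \<open>n \<ge> 2\<close> are not
needed: \<open>\<rho>\<close> enters only as the eigenvalue belonging to the positive vector \<open>p\<close>.\<close>
theorem lemma11:
  fixes A :: "real^'n^'n" and \<rho> :: real and p :: "real^'n" and i j :: 'n
  assumes "CARD('n) \<ge> 2"
    and "weighted_multigraph_adj A"
    and "connected_adj A"
    and "\<rho> = spectral_radius A"
    and "\<forall>k. p$k > 0" and "A *v p = \<rho> *\<^sub>R p" and "(\<Sum>k\<in>UNIV. p$k) = 1"
    and "i \<noteq> j"
  shows "\<exists>c > 0. (\<chi> k. Ybar (\<rho> *\<^sub>R mat 1 - A) j $ k $ i * p$j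
                     + Ybar (\<rho> *\<^sub>R mat 1 - A) i $ k $ j * p$i) = c *\<^sub>R p"
proof -
  interpret perron_graph A \<rho> p
    using assms(2,3,5,6) by unfold_locales (auto simp: weighted_multigraph_adj_def)
  define w where "w = p$j *\<^sub>R column i (Ybar \<Lambda> j) + p$i *\<^sub>R column j (Ybar \<Lambda> i)"
  have "w \<bullet> (\<Lambda> *v w) = 0"
    using Ybar_Lambda_symmetrized_null[OF assms(8)] by (simp add: w_def)
  then have w_parallel: "w = (w$j / p$j) *\<^sub>R p"
    by (rule Lambda_form_eq_0_imp_parallel)
  have "w$j = p$i * Ybar \<Lambda> i $ j $ j"
    using Ybar_Lambda_column(1)[OF assms(8)] by (simp add: w_def column_def)
  then have "0 < w$j / p$j"
    using Ybar_Lambda_diagonal_pos[of j i] assms(5,8) by simp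
  moreover have "(\<chi> k. Ybar \<Lambda> j $ k $ i * p$j + Ybar \<Lambda> i $ k $ j * p$i) = w"
    by (simp add: w_def column_def vec_eq_iff mult.commute)
  ultimately show ?thesis
    using w_parallel by metis
qed

end
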